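(* Let $I\subseteq\mathbb{R}$ be an interval, $p\in\mathbb{N}$, $\mathbf{d}=(d_1,\dots,d_p)\in\mathbb{N}^p$, $\alpha\in\mathbb{N}_p^{\mathbf{d}}$, and let $\mathbf{M}=(M_1,\dots,M_p)$ be a $\mathbf{d}$-averaging mapping on $I$. Assume that the root graph $\mathcal{R}(G_\alpha)$ is ergodic and that each $M_i$ ($i\in\{1,\dots,p\}$) is continuous and strict. Then there exists a unique continuous $\mathbf{M}_\alpha$-invariant mean $K_\alpha\colon I^p\to I$ such that $$\lim_{n\to\infty}\mathbf{M}_\alpha^n=\mathbf{K}_\alpha\quad\text{pointwise on } I^p,$$ where $\mathbf{K}_\alpha\colon I^p\to I^p$, $\mathbf{K}_\alpha=(K_\alpha,\dots,K_\alpha)$, and $K_\alpha$ depends only on the root coordinates: there exists a mean $K_\alpha^*\colon I^{|R(G_\alpha)|}\to I$ such that $K_\alpha(x_1,\dots,x_p)=K^*_\alpha(x_i: i\in R(G_\alpha))$ for all $(x_1,\dots,x_p)\in I^p$.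
   Context: A $k$-variable mean on an interval $I$ is a function $M\colon I^k\to I$ with $\min(x)\le M(x)\le\max(x)$ for all $x\in I^k$; it is strict if both inequalities are strict for every nonconstant $x$. A mean-type mapping is $\mathbf{M}=(M_1,\dots,M_p)\colon I^p\to I^p$ with each $M_i$ a $p$-variable mean; a function $K\colon I^p\to I$ is $\mathbf{M}$-invariant if $K\circ\mathbf{M}=K$. $\mathbf{M}^n$ denotes the $n$-th iterate. Notation: $\mathbb{N}=\{1,2,\dots\}$, $\mathbb{N}_p=\{1,\dots,p\}$, $\mathbb{N}_p^{\mathbf{d}}=\mathbb{N}_p^{d_1}\times\dots\times\mathbb{N}_p^{d_p}$. A $\mathbf{d}$-averaging mapping on $I$ is a sequence $\mathbf{M}=(M_1,\dots,M_p)$ where each $M_i$ is a $d_i$-variable mean on $I$. For $\alpha=(\alpha_1,\dots,\alpha_p)\in\mathbb{N}_p^{\mathbf{d}}$, $\alpha_i=(\alpha_{i,1},\dots,\alpha_{i,d_i})$, define $\mathbf{M}_\alpha\colon I^p\to I^p$ by $\mathbf{M}_\alpha(x_1,\dots,x_p)=\big(M_i(x_{\alpha_{i,1}},\dots,x_{\alpha_{i,d_i}})\big)_{i=1}^p$. The $\alpha$-incidence graph is the digraph $G_\alpha=(\mathbb{N}_p,E_\alpha)$ with $E_\alpha=\{(\alpha_{i,j},i): i\in\mathbb{N}_p,\ j\in\mathbb{N}_{d_i}\}$. Graph notions: a walk is a sequence $(v_0,\dots,v_n)$ with consecutive pairs being edges; $v\leadsto w$ if a walk from $v$ to $w$ exists;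 a digraph is irreducible if $v\leadsto w$ for all vertices $v,w$; a cycle is a nonempty walk whose only repeated vertices are the first and last; a digraph is aperiodic if no integer $k>1$ divides the length of every cycle; ergodic means nonempty, irreducible and aperiodic. The root $R(G)$ of a digraph $G=(V,E)$ is the union of those strongly connected components (classes of $v\sim w\iff v\leadsto w$ and $w\leadsto v$) that receive no edge from a vertex in a different component; the root graph is $\mathcal{R}(G)=(R(G),E\cap(R(G)\times R(G)))$. *)

theory Defs
  imports "HOL-Analysis.Analysis"
begin

text \<open>Points of I^k are represented as functions nat => real in the extensional
  function set PiE {..<k} (\<lambda>_. I) (coordinates indexed 0..k-1, undefined elsewhere).\<close>

definition cube :: "real set \<Rightarrow> nat \<Rightarrow> (nat \<Rightarrow> real) set" where
  "cube I k = PiE {..<k} (\<lambda>_. I)"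

definition mean_on :: "real set \<Rightarrow> nat \<Rightarrow> ((nat \<Rightarrow> real) \<Rightarrow> real) \<Rightarrow> bool" where
  "mean_on I k M \<longleftrightarrow> (\<forall>x\<in>cube I k. M x \<in> I \<and>
      Min (x ` {..<k}) \<le> M x \<and> M x \<le> Max (x ` {..<k}))"

definition strict_mean_on :: "real set \<Rightarrow> nat \<Rightarrow> ((nat \<Rightarrow> real) \<Rightarrow> real) \<Rightarrow> bool" where
  "strict_mean_on I k M \<longleftrightarrow> mean_on I k M \<and>
     (\<forall>x\<in>cube I k. (\<exists>j<k. \<exists>l<k. x j \<noteq> x l) \<longrightarrow>
        Min (x ` {..<k}) < M x \<and> M x < Max (x ` {..<k}))"

definition Malpha :: "(nat \<Rightarrow> (nat \<Rightarrow> real) \<Rightarrow> real) \<Rightarrow> (nat \<Rightarrow> nat) \<Rightarrow> (nat \<Rightarrow> nat \<Rightarrow> nat)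
    \<Rightarrow> nat \<Rightarrow> (nat \<Rightarrow> real) \<Rightarrow> (nat \<Rightarrow> real)" where
  "Malpha M d \<alpha> p x = restrict (\<lambda>i. M i (restrict (\<lambda>j. x (\<alpha> i j)) {..<d i})) {..<p}"

definition Ealpha :: "(nat \<Rightarrow> nat) \<Rightarrow> (nat \<Rightarrow> nat \<Rightarrow> nat) \<Rightarrow> nat \<Rightarrow> (nat \<times> nat) set" where
  "Ealpha d \<alpha> p = {(\<alpha> i j, i) | i j. i < p \<and> j < d i}"

definition strongly_conn :: "('v \<times> 'v) set \<Rightarrow> 'v \<Rightarrow> 'v \<Rightarrow> bool" where
  "strongly_conn E v w \<longleftrightarrow> (v, w) \<in> E\<^sup>* \<and> (w, v) \<in> E\<^sup>*"

text \<open>Root: union of strongly connected components receiving no edge from another component.\<close>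
definition root :: "'v set \<Rightarrow> ('v \<times> 'v) set \<Rightarrow> 'v set" where
  "root V E = {v\<in>V. \<forall>u w. (u, w) \<in> E \<and> strongly_conn E w v \<longrightarrow> strongly_conn E u v}"

definition root_edges :: "'v set \<Rightarrow> ('v \<times> 'v) set \<Rightarrow> ('v \<times> 'v) set" where
  "root_edges V E = E \<inter> (root V E \<times> root V E)"

text \<open>Walks as vertex lists; a cycle is a walk with at least one edge whose only repeated
  vertices are the first and the last; its length is the number of edges.\<close>
definition walk :: "('v \<times> 'v) set \<Rightarrow> 'v list \<Rightarrow> bool" where
  "walk E vs \<longleftrightarrow> vs \<noteq> [] \<and> (\<forall>i. Suc i < length vs \<longrightarrow> (vs ! i, vs ! Suc i) \<in> E)"

definition cycle :: "('v \<times> 'v) set \<Rightarrow> 'v list \<Rightarrow> bool" where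
  "cycle E vs \<longleftrightarrow> walk E vs \<and> length vs \<ge> 2 \<and> hd vs = last vs \<and> distinct (tl vs)"

definition aperiodic :: "('v \<times> 'v) set \<Rightarrow> bool" where
  "aperiodic E \<longleftrightarrow> \<not> (\<exists>k::nat. k > 1 \<and> (\<forall>c. cycle E c \<longrightarrow> k dvd (length c - 1)))"

definition irreducible_graph :: "'v set \<Rightarrow> ('v \<times> 'v) set \<Rightarrow> bool" where
  "irreducible_graph V E \<longleftrightarrow> (\<forall>v\<in>V. \<forall>w\<in>V. (v, w) \<in> E\<^sup>*)"

definition ergodic :: "'v set \<Rightarrow> ('v \<times> 'v) set \<Rightarrow> bool" where
  "ergodic V E \<longleftrightarrow> V \<noteq> {} \<and> irreducible_graph V E \<and> aperiodic E"

end

(* Ergodicity of the root graph yields a root vertex r and a length N such that every vertex is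
   reached from r by a walk of length N: aperiodicity gives closed walks at r of all large lengths,
   and every vertex is reachable from the root.  A strict mean stays strictly below the maximum of
   its arguments as soon as one argument does; so if x r < max x, then after N steps of M_alpha all
   coordinates are below max x, and symmetrically for the minimum.  Thus the spread max - min
   strictly decreases under M_alpha^N at every nonconstant point, and a compactness argument
   forces the spread along each orbit to 0.  The coordinatewise maxima and minima of the orbit,
   a decreasing and an increasing sequence of continuous functions, then converge to a common
   limit K, which is continuous, invariant and a mean; since root coordinates of M_alpha depend
   only on root coordinates, so does K. *)
theory Submission
  imports Defs
begin

section \<open>Walks and roots of digraphs\<close>

lemma walk_Cons_Cons: "walk E (x # y # xs) \<longleftrightarrow> (x, y) \<in> E \<and> walk E (y # xs)"
  unfolding walk_def by (auto simp: nth_Cons split: nat.splits)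

lemma walk_mono: "walk E vs \<Longrightarrow> E \<subseteq> E' \<Longrightarrow> walk E' vs"
  unfolding walk_def by blast

lemma walk_relpow: "walk E vs \<Longrightarrow> (hd vs, last vs) \<in> E ^^ (length vs - 1)"
proof (induction vs rule: induct_list012)
  case (3 x y zs)
  then have "(x, y) \<in> E" "(y, last (y # zs)) \<in> E ^^ (length (y # zs) - 1)"
    by (simp_all add: walk_Cons_Cons)
  then have "(x, last (y # zs)) \<in> E ^^ Suc (length (y # zs) - 1)"
    by (rule relpow_Suc_I2)
  then show ?case by simp
qed (simp_all add: walk_def)

lemma strongly_conn_trans: "strongly_conn E a b \<Longrightarrow> strongly_conn E b c \<Longrightarrow> strongly_conn E a c"
  unfolding strongly_conn_def by (auto intro: rtrancl_trans)

lemma strongly_conn_sym: "strongly_conn E a b \<Longrightarrow> strongly_conn E b a"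
  unfolding strongly_conn_def by auto

lemma root_pred_closed:
  assumes "E \<subseteq> V \<times> V" "(u, w) \<in> E" "w \<in> root V E"
  shows "u \<in> root V E"
proof -
  have "strongly_conn E w w" unfolding strongly_conn_def by simp
  then have uw: "strongly_conn E u w" using assms(2,3) unfolding root_def by blast
  show ?thesis unfolding root_def
  proof (intro CollectI conjI allI impI)
    show "u \<in> V" using assms(1,2) by blast
    fix u' w' assume h: "(u', w') \<in> E \<and> strongly_conn E w' u"
    then have "strongly_conn E w' w" using strongly_conn_trans[OF _ uw] by blast
    then have "strongly_conn E u' w" using h assms(3) unfolding root_def by blast
    then show "strongly_conn E u' u" by (rule strongly_conn_trans[OF _ strongly_conn_sym[OF uw]])
  qed
qed

lemma root_reaches:
  assumes "finite V" "E \<subseteq> V \<times> V" "v \<in> V"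
  shows "\<exists>r\<in>root V E. (r, v) \<in> E\<^sup>*"
proof -
  define anc where "anc w = {u. (u, w) \<in> E\<^sup>*}" for w
  have anc_sub: "anc w \<subseteq> V" if "w \<in> V" for w
    using that assms(2) unfolding anc_def by (auto elim: converse_rtranclE)
  obtain u where u: "u \<in> anc v" and u_min: "\<And>u'. u' \<in> anc v \<Longrightarrow> card (anc u) \<le> card (anc u')"
    using ex_has_least_nat[of "\<lambda>u. u \<in> anc v" v "\<lambda>u. card (anc u)"] by (auto simp: anc_def)
  have "u \<in> V" using u anc_sub[OF assms(3)] by blast
  \<comment> \<open>An edge entering the strongly connected component of u would come from a vertex
    with fewer ancestors.\<close>
  have "u \<in> root V E" unfolding root_def
  proof (intro CollectI conjI allI impI)
    show "u \<in> V" by fact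
    fix u' w' assume h: "(u', w') \<in> E \<and> strongly_conn E w' u"
    then have u'u: "(u', u) \<in> E\<^sup>*"
      unfolding strongly_conn_def by (meson converse_rtrancl_into_rtrancl)
    then have "anc u' \<subseteq> anc u" "u' \<in> anc v"
      using u unfolding anc_def by auto
    moreover have "finite (anc u)" using anc_sub[OF \<open>u \<in> V\<close>] assms(1) finite_subset by blast
    ultimately have "anc u' = anc u" using u_min by (meson card_seteq)
    then show "strongly_conn E u' u" using u'u unfolding anc_def strongly_conn_def by auto
  qed
  then show ?thesis using u unfolding anc_def by blast
qed

section \<open>Primitivity of an ergodic root\<close>

lemma consecutive_generators_all_large:
  fixes L :: "nat set"
  assumes L0: "0 \<in> L" and L_add: "\<And>a b. a \<in> L \<Longrightarrow> b \<in> L \<Longrightarrow> a + b \<in> L"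
    and b: "b \<in> L" "b + 1 \<in> L" and n: "b * b \<le> n"
  shows "n \<in> L"
proof -
  have L_mult: "k * a \<in> L" if "a \<in> L" for a k
    by (induction k) (simp_all add: L0 L_add that)
  show ?thesis
  proof (cases "b = 0")
    case True
    then show ?thesis using L_mult[OF b(2), of n] by simp
  next
    case False
    define q s where "q = n div b" and "s = n mod b"
    have n_eq: "n = q * b + s" and "s < b" using False unfolding q_def s_def by simp_all
    then have "b * b < b * (q + 1)" using n by (simp add: algebra_simps)
    then have "b < q + 1" by (simp only: mult_less_cancel1)
    then have "s \<le> q" using \<open>s < b\<close> by simp
    then obtain t where "q = s + t" using le_iff_add by blast
    then have "n = t * b + s * (b + 1)" using n_eq by (simp add: algebra_simps)
    then show ?thesis using L_add[OF L_mult[OF b(1)] L_mult[OF b(2)]] by simp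
  qed
qed

lemma add_closed_nat_set_all_large:
  fixes L :: "nat set"
  assumes L0: "0 \<in> L" and L_add: "\<And>a b. a \<in> L \<Longrightarrow> b \<in> L \<Longrightarrow> a + b \<in> L"
    and gaps: "\<And>k. k > 1 \<Longrightarrow> \<exists>a c. a \<in> L \<and> a + c \<in> L \<and> \<not> k dvd c"
  shows "\<exists>N. \<forall>n\<ge>N. n \<in> L"
proof -
  have L_mult: "k * a \<in> L" if "a \<in> L" for a k
    by (induction k) (simp_all add: L0 L_add that)
  define P where "P = {c. 0 < c \<and> (\<exists>a\<in>L. a + c \<in> L)}"
  obtain a c where "a \<in> L" "a + c \<in> L" "\<not> 2 dvd c" using gaps[of 2] by auto
  then have "c \<in> P" unfolding P_def by (auto intro!: gr0I)
  define g where "g = (LEAST c. c \<in> P)"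
  have "g \<in> P" unfolding g_def by (rule LeastI) fact
  then obtain b where b: "b \<in> L" "b + g \<in> L" and g_pos: "0 < g" unfolding P_def by blast
  have g_min: "g \<le> c" if "c \<in> P" for c unfolding g_def using that by (rule Least_le)
  \<comment> \<open>Otherwise a mod g is a smaller positive gap: with q = a div g,
    a + q b = q (b + g) + a mod g.\<close>
  have g_dvd: "g dvd a" if a: "a \<in> L" for a
  proof (rule ccontr)
    assume "\<not> g dvd a"
    then have "0 < a mod g" by (simp add: mod_greater_zero_iff_not_dvd)
    have "a div g * (b + g) + a mod g = a + a div g * b"
      using div_mult_mod_eq[of a g] by (simp add: algebra_simps)
    then have "a div g * (b + g) + a mod g \<in> L" using L_add[OF a L_mult[OF b(1)]] by simp
    with \<open>0 < a mod g\<close> L_mult[OF b(2)] have "a mod g \<in> P" unfolding P_def by blast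
    then have "g \<le> a mod g" by (rule g_min)
    then show False using mod_less_divisor[OF g_pos, of a] by simp
  qed
  have "g = 1"
  proof (rule ccontr)
    assume "g \<noteq> 1"
    then obtain a c where "a \<in> L" "a + c \<in> L" "\<not> g dvd c" using gaps[of g] g_pos by auto
    then show False using g_dvd dvd_add_right_iff by blast
  qed
  then have "b + 1 \<in> L" using b(2) by simp
  then show ?thesis using consecutive_generators_all_large[OF L0 L_add b(1)] by blast
qed

lemma root_edges_subset: "root_edges V E \<subseteq> E"
  unfolding root_edges_def by blast

lemma ergodic_root_strongly_connected:
  assumes "ergodic (root V E) (root_edges V E)" "v \<in> root V E" "w \<in> root V E"
  shows "(v, w) \<in> E\<^sup>*"
  using assms rtrancl_mono[OF root_edges_subset]
  unfolding ergodic_def irreducible_graph_def by blast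

lemma ergodic_root_closed_walks:
  assumes erg: "ergodic (root V E) (root_edges V E)"
  shows "\<exists>r\<in>root V E. \<exists>N. \<forall>n\<ge>N. (r, r) \<in> E ^^ n"
proof -
  let ?R = "root V E" and ?ER = "root_edges V E"
  obtain r where r: "r \<in> ?R" using erg unfolding ergodic_def by blast
  define L where "L = {n. (r, r) \<in> E ^^ n}"
  \<comment> \<open>Inserting a root cycle into a closed walk at r shows that every cycle length is a
    gap of L.\<close>
  have gaps: "\<exists>a c. a \<in> L \<and> a + c \<in> L \<and> \<not> k dvd c" if "k > 1" for k
  proof -
    obtain cy where cy: "cycle ?ER cy" "\<not> k dvd (length cy - 1)"
      using erg \<open>k > 1\<close> unfolding ergodic_def aperiodic_def by blast
    then have walk: "walk ?ER cy" and "2 \<le> length cy" and closed: "hd cy = last cy"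
      unfolding cycle_def by auto
    then have "(cy ! 0, cy ! 1) \<in> ?ER" unfolding walk_def by simp
    then have "hd cy \<in> ?R" using \<open>2 \<le> length cy\<close> unfolding root_edges_def by (cases cy) auto
    then have "(r, hd cy) \<in> E\<^sup>*" "(hd cy, r) \<in> E\<^sup>*"
      using ergodic_root_strongly_connected[OF erg] r by blast+
    then obtain a b where a: "(r, hd cy) \<in> E ^^ a" and b: "(hd cy, r) \<in> E ^^ b"
      unfolding rtrancl_power by blast
    have "(hd cy, hd cy) \<in> E ^^ (length cy - 1)"
      using walk_relpow[OF walk_mono[OF walk root_edges_subset]] closed by simp
    with a b have "(r, r) \<in> E ^^ (a + (length cy - 1) + b)"
      by (auto simp: relpow_add)
    then have "(a + b) + (length cy - 1) \<in> L" unfolding L_def by (simp add: ac_simps)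
    moreover have "a + b \<in> L" using a b unfolding L_def by (auto simp: relpow_add)
    ultimately show ?thesis using cy(2) by blast
  qed
  have "0 \<in> L" "\<And>a b. a \<in> L \<Longrightarrow> b \<in> L \<Longrightarrow> a + b \<in> L"
    unfolding L_def by (auto simp: relpow_add)
  from add_closed_nat_set_all_large[OF this gaps] obtain N where N: "\<forall>n\<ge>N. n \<in> L" by blast
  then show ?thesis using r unfolding L_def by blast
qed

lemma ergodic_root_primitive:
  assumes "finite V" "E \<subseteq> V \<times> V" and erg: "ergodic (root V E) (root_edges V E)"
  shows "\<exists>r\<in>root V E. \<exists>N. \<forall>v\<in>V. (r, v) \<in> E ^^ N"
proof -
  obtain r N0 where r: "r \<in> root V E" and loops: "\<forall>n\<ge>N0. (r, r) \<in> E ^^ n"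
    using ergodic_root_closed_walks[OF erg] by blast
  have "\<forall>v\<in>V. \<exists>n. (r, v) \<in> E ^^ n"
  proof
    fix v assume "v \<in> V"
    then obtain r' where r': "r' \<in> root V E" and r'v: "(r', v) \<in> E\<^sup>*"
      using root_reaches[OF assms(1,2)] by blast
    have "(r, v) \<in> E\<^sup>*" by (rule rtrancl_trans[OF ergodic_root_strongly_connected[OF erg r r'] r'v])
    then show "\<exists>n. (r, v) \<in> E ^^ n" by (simp add: rtrancl_power)
  qed
  from bchoice[OF this] obtain len where len: "\<forall>v\<in>V. (r, v) \<in> E ^^ len v" ..
  define N where "N = N0 + (\<Sum>v\<in>V. len v)"
  have reach: "(r, v) \<in> E ^^ N" if v: "v \<in> V" for v
  proof -
    have "len v \<le> (\<Sum>v\<in>V. len v)" using assms(1) v by (intro member_le_sum) auto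
    then have N_split: "N = (N - len v) + len v" and "N0 \<le> N - len v" unfolding N_def by auto
    have "(r, v) \<in> E ^^ (N - len v) O E ^^ len v"
      using loops \<open>N0 \<le> N - len v\<close> len v by blast
    then show ?thesis by (subst N_split) (simp only: relpow_add)
  qed
  then show ?thesis using r by blast
qed

section \<open>Means on cubes\<close>

lemma cube_iff: "x \<in> cube I k \<longleftrightarrow> (\<forall>i<k. x i \<in> I) \<and> (\<forall>i\<ge>k. x i = undefined)"
  unfolding cube_def PiE_iff extensional_def by auto

lemma cube_mono: "S \<subseteq> T \<Longrightarrow> cube S k \<subseteq> cube T k"
  unfolding cube_def by (rule PiE_mono) blast

lemma compact_cube:
  assumes "compact S"
  shows "compact (cube S k)"
proof -
  have "cube S k = PiE UNIV (\<lambda>i. if i < k then S else {undefined})"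
    unfolding cube_iff PiE_iff set_eq_iff by (simp add: not_less) blast
  moreover have "compactin (product_topology (\<lambda>i. euclidean) UNIV) \<dots>"
    unfolding compactin_PiE using assms by simp
  ultimately show ?thesis unfolding euclidean_product_topology by simp
qed

lemma continuous_on_Max_coords:
  assumes "finite A" "A \<noteq> {}"
  shows "continuous_on S (\<lambda>x::nat \<Rightarrow> real. Max (x ` A))"
  using assms
proof (induction A rule: finite_ne_induct)
  case (insert a B)
  then have "(\<lambda>x::nat \<Rightarrow> real. Max (x ` insert a B)) = (\<lambda>x. max (x a) (Max (x ` B)))"
    by auto
  then show ?case
    by (simp only:) (intro continuous_on_max insert.IH continuous_on_subset[OF continuous_on_product_coordinates]; simp)
qed (simp add: continuous_on_subset[OF continuous_on_product_coordinates])

lemma continuous_on_Min_coords: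
  assumes "finite A" "A \<noteq> {}"
  shows "continuous_on S (\<lambda>x::nat \<Rightarrow> real. Min (x ` A))"
  using assms
proof (induction A rule: finite_ne_induct)
  case (insert a B)
  then have "(\<lambda>x::nat \<Rightarrow> real. Min (x ` insert a B)) = (\<lambda>x. min (x a) (Min (x ` B)))"
    by auto
  then show ?case
    by (simp only:) (intro continuous_on_min insert.IH continuous_on_subset[OF continuous_on_product_coordinates]; simp)
qed (simp add: continuous_on_subset[OF continuous_on_product_coordinates])

lemma mean_on_le_bound:
  assumes "mean_on I k M" "x \<in> cube I k" "0 < k" "\<And>j. j < k \<Longrightarrow> x j \<le> m"
  shows "M x \<le> m"
proof -
  have "M x \<le> Max (x ` {..<k})" using assms(1,2) unfolding mean_on_def by blast
  also have "\<dots> \<le> m" using assms(3,4) by (subst Max_le_iff) auto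
  finally show ?thesis .
qed

lemma mean_on_ge_bound:
  assumes "mean_on I k M" "x \<in> cube I k" "0 < k" "\<And>j. j < k \<Longrightarrow> m \<le> x j"
  shows "m \<le> M x"
proof -
  have "m \<le> Min (x ` {..<k})" using assms(3,4) by (subst Min_ge_iff) auto
  also have "\<dots> \<le> M x" using assms(1,2) unfolding mean_on_def by blast
  finally show ?thesis .
qed

lemma strict_mean_on_less_bound:
  assumes M: "strict_mean_on I k M" and x: "x \<in> cube I k"
    and le: "\<And>j. j < k \<Longrightarrow> x j \<le> m" and j0: "j0 < k" "x j0 < m"
  shows "M x < m"
proof (cases "\<exists>j<k. \<exists>l<k. x j \<noteq> x l")
  case True
  then have "M x < Max (x ` {..<k})" using M x unfolding strict_mean_on_def by blast
  also have "\<dots> \<le> m" using le j0(1) by (subst Max_le_iff) auto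
  finally show ?thesis .
next
  case False
  have mean: "mean_on I k M" using M unfolding strict_mean_on_def by simp
  have eq: "x j = x j0" if "j < k" for j using False that j0(1) by blast
  have "M x \<le> x j0" using j0(1) by (intro mean_on_le_bound[OF mean x] eq_refl eq) simp_all
  then show ?thesis using j0(2) by simp
qed

lemma strict_mean_on_greater_bound:
  assumes M: "strict_mean_on I k M" and x: "x \<in> cube I k"
    and ge: "\<And>j. j < k \<Longrightarrow> m \<le> x j" and j0: "j0 < k" "m < x j0"
  shows "m < M x"
proof (cases "\<exists>j<k. \<exists>l<k. x j \<noteq> x l")
  case True
  have "m \<le> Min (x ` {..<k})" using ge j0(1) by (subst Min_ge_iff) auto
  also have "\<dots> < M x" using True M x unfolding strict_mean_on_def by blast
  finally show ?thesis .
next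
  case False
  have mean: "mean_on I k M" using M unfolding strict_mean_on_def by simp
  have eq: "x j = x j0" if "j < k" for j using False that j0(1) by blast
  have "x j0 \<le> M x" using j0(1) by (intro mean_on_ge_bound[OF mean x] eq_refl eq[symmetric]) simp_all
  then show ?thesis using j0(2) by simp
qed

section \<open>Two limit principles\<close>

lemma continuous_on_sandwiched_limit:
  fixes f :: "'a::topological_space \<Rightarrow> 'b::linorder_topology"
  assumes "\<And>n. continuous_on S (g n)" "\<And>n. continuous_on S (h n)"
    and "\<And>n x. x \<in> S \<Longrightarrow> g n x \<le> f x" "\<And>n x. x \<in> S \<Longrightarrow> f x \<le> h n x"
    and "\<And>x. x \<in> S \<Longrightarrow> (\<lambda>n. g n x) \<longlonglongrightarrow> f x" "\<And>x. x \<in> S \<Longrightarrow> (\<lambda>n. h n x) \<longlonglongrightarrow> f x"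
  shows "continuous_on S f"
  unfolding continuous_on_def
proof (intro ballI order_tendstoI)
  fix x a assume x: "x \<in> S"
  have in_S: "eventually (\<lambda>y. y \<in> S) (at x within S)"
    by (simp add: eventually_at_filter)
  have cont_at: "(g n \<longlongrightarrow> g n x) (at x within S)" "(h n \<longlongrightarrow> h n x) (at x within S)" for n
    using assms(1,2)[of n] x unfolding continuous_on_def by simp_all
  {
    assume "a < f x"
    from order_tendstoD(1)[OF assms(5)[OF x] this] obtain n where n: "a < g n x"
      unfolding eventually_sequentially by auto
    from in_S order_tendstoD(1)[OF cont_at(1) n] show "eventually (\<lambda>y. a < f y) (at x within S)"
    proof eventually_elim
      case (elim y)
      show ?case by (rule less_le_trans[OF elim(2) assms(3)[OF elim(1)]])
    qed
  next
    assume "f x < a"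
    from order_tendstoD(2)[OF assms(6)[OF x] this] obtain n where n: "h n x < a"
      unfolding eventually_sequentially by auto
    from in_S order_tendstoD(2)[OF cont_at(2) n] show "eventually (\<lambda>y. f y < a) (at x within S)"
    proof eventually_elim
      case (elim y)
      show ?case by (rule le_less_trans[OF assms(4)[OF elim(1)] elim(2)])
    qed
  }
qed

lemma strict_Lyapunov_eventually_below:
  fixes T :: "'a::t2_space \<Rightarrow> 'a" and V :: "'a \<Rightarrow> real"
  assumes C: "compact C" "T ` C \<subseteq> C" and cont: "continuous_on C T" "continuous_on C V"
    and strict: "\<And>y. y \<in> C \<Longrightarrow> 0 < V y \<Longrightarrow> V (T y) < V y"
    and x: "x \<in> C" and e: "0 < e"
  shows "\<exists>k. V ((T ^^ k) x) < e"
proof -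
  define S where "S = C \<inter> V -` {e..}"
  have "closed S" unfolding S_def
    by (rule continuous_closed_preimage[OF cont(2) compact_imp_closed[OF C(1)]]) simp
  have "S \<subseteq> C" unfolding S_def by blast
  then have "compact S" using compact_Int_closed[OF C(1) \<open>closed S\<close>] by (simp add: Int_absorb1)
  have orbit: "(T ^^ k) x \<in> C" for k by (induction k) (use x C(2) in auto)
  show ?thesis
  proof (cases "S = {}")
    case True
    then have "V x < e" using x unfolding S_def by auto
    then show ?thesis by (intro exI[of _ 0]) simp
  next
    case False
    have "continuous_on C (V \<circ> T)"
      by (rule continuous_on_compose[OF cont(1) continuous_on_subset[OF cont(2) C(2)]])
    then have "continuous_on S (\<lambda>y. V y - (V \<circ> T) y)"
      by (rule continuous_on_subset[OF continuous_on_diff[OF cont(2)] \<open>S \<subseteq> C\<close>])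
    from continuous_attains_inf[OF \<open>compact S\<close> False this] obtain y0
      where "y0 \<in> S" and y0_min: "\<And>y. y \<in> S \<Longrightarrow> V y0 - V (T y0) \<le> V y - V (T y)"
      by auto
    define \<delta> where "\<delta> = V y0 - V (T y0)"
    have "0 < \<delta>" using strict[of y0] \<open>y0 \<in> S\<close> e unfolding S_def \<delta>_def by auto
    have descent: "V ((T ^^ k) x) \<le> V x - k * \<delta>" if "\<forall>j<k. e \<le> V ((T ^^ j) x)" for k
      using that
    proof (induction k)
      case (Suc k)
      then have "(T ^^ k) x \<in> S" using orbit[of k] unfolding S_def by simp
      then have "\<delta> \<le> V ((T ^^ k) x) - V ((T ^^ Suc k) x)" using y0_min unfolding \<delta>_def by simp
      moreover have "V ((T ^^ k) x) \<le> V x - k * \<delta>" using Suc by simp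
      ultimately show ?case by (simp add: algebra_simps)
    qed simp
    obtain k :: nat where k: "V x - e < k * \<delta>" using reals_Archimedean3[OF \<open>0 < \<delta>\<close>] by blast
    show ?thesis
    proof (cases "\<forall>j<k. e \<le> V ((T ^^ j) x)")
      case True
      then show ?thesis using descent[OF True] k by (intro exI[of _ k]) linarith
    qed (auto simp: not_le)
  qed
qed

section \<open>Iterating the mean-type mapping\<close>

locale averaging_system =
  fixes I :: "real set" and p :: nat and d :: "nat \<Rightarrow> nat" and \<alpha> :: "nat \<Rightarrow> nat \<Rightarrow> nat"
    and M :: "nat \<Rightarrow> (nat \<Rightarrow> real) \<Rightarrow> real"
  assumes interval: "is_interval I"
    and arity_pos: "\<And>i. i < p \<Longrightarrow> 0 < d i"
    and \<alpha>_range: "\<And>i j. i < p \<Longrightarrow> j < d i \<Longrightarrow> \<alpha> i j < p"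
    and strict: "\<And>i. i < p \<Longrightarrow> strict_mean_on I (d i) (M i)"
    and cont: "\<And>i. i < p \<Longrightarrow> continuous_on (cube I (d i)) (M i)"
    and ergodic_root: "ergodic (root {..<p} (Ealpha d \<alpha> p)) (root_edges {..<p} (Ealpha d \<alpha> p))"
begin

abbreviation "E \<equiv> Ealpha d \<alpha> p"
abbreviation "R \<equiv> root {..<p} E"
abbreviation "F \<equiv> Malpha M d \<alpha> p"
abbreviation "X \<equiv> cube I p"

lemma E_subset: "E \<subseteq> {..<p} \<times> {..<p}"
  using \<alpha>_range unfolding Ealpha_def by auto

lemma R_subset: "R \<subseteq> {..<p}"
  unfolding root_def by auto

lemma R_nonempty: "R \<noteq> {}"
  using ergodic_root unfolding ergodic_def by blast

lemma p_pos: "0 < p"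
  using R_subset R_nonempty by (metis lessThan_empty_iff not_gr0 subset_empty)

lemma mean_on_M: "i < p \<Longrightarrow> mean_on I (d i) (M i)"
  using strict unfolding strict_mean_on_def by blast

definition args :: "(nat \<Rightarrow> real) \<Rightarrow> nat \<Rightarrow> nat \<Rightarrow> real" where
  "args x i = restrict (\<lambda>j. x (\<alpha> i j)) {..<d i}"

lemma F_apply: "i < p \<Longrightarrow> F x i = M i (args x i)"
  unfolding Malpha_def args_def by simp

lemma args_cube: "x \<in> X \<Longrightarrow> i < p \<Longrightarrow> args x i \<in> cube I (d i)"
  unfolding args_def cube_iff using \<alpha>_range by auto

lemma F_cube:
  assumes "x \<in> X"
  shows "F x \<in> X"
  unfolding cube_iff[of "F x"]
proof safe
  fix i assume i: "i < p"
  show "F x i \<in> I"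
    using mean_on_M[OF i] args_cube[OF assms i] unfolding F_apply[OF i] mean_on_def by blast
next
  fix i assume "p \<le> i"
  then show "F x i = undefined" unfolding Malpha_def by simp
qed

lemma funpow_F_cube: "x \<in> X \<Longrightarrow> (F ^^ n) x \<in> X"
  by (induction n) (simp_all add: F_cube)

lemma F_le:
  assumes "x \<in> X" "i < p" "\<And>j. j < d i \<Longrightarrow> x (\<alpha> i j) \<le> m"
  shows "F x i \<le> m"
  unfolding F_apply[OF assms(2)]
  by (rule mean_on_le_bound[OF mean_on_M args_cube arity_pos]) (simp_all add: args_def assms)

lemma F_ge:
  assumes "x \<in> X" "i < p" "\<And>j. j < d i \<Longrightarrow> m \<le> x (\<alpha> i j)"
  shows "m \<le> F x i"
  unfolding F_apply[OF assms(2)]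
  by (rule mean_on_ge_bound[OF mean_on_M args_cube arity_pos]) (simp_all add: args_def assms)

lemma F_less:
  assumes "x \<in> X" "i < p" "\<And>j. j < d i \<Longrightarrow> x (\<alpha> i j) \<le> m" "j0 < d i" "x (\<alpha> i j0) < m"
  shows "F x i < m"
  unfolding F_apply[OF assms(2)]
  by (rule strict_mean_on_less_bound[OF strict args_cube _ assms(4)]) (simp_all add: args_def assms)

lemma F_greater:
  assumes "x \<in> X" "i < p" "\<And>j. j < d i \<Longrightarrow> m \<le> x (\<alpha> i j)" "j0 < d i" "m < x (\<alpha> i j0)"
  shows "m < F x i"
  unfolding F_apply[OF assms(2)]
  by (rule strict_mean_on_greater_bound[OF strict args_cube _ assms(4)]) (simp_all add: args_def assms)

definition cmax :: "(nat \<Rightarrow> real) \<Rightarrow> real" where "cmax x = Max (x ` {..<p})"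
definition cmin :: "(nat \<Rightarrow> real) \<Rightarrow> real" where "cmin x = Min (x ` {..<p})"

lemma cmax_le_iff: "cmax x \<le> m \<longleftrightarrow> (\<forall>i<p. x i \<le> m)"
  unfolding cmax_def using p_pos by (subst Max_le_iff) auto

lemma cmax_less_iff: "cmax x < m \<longleftrightarrow> (\<forall>i<p. x i < m)"
  unfolding cmax_def using p_pos by (subst Max_less_iff) auto

lemma cmin_ge_iff: "m \<le> cmin x \<longleftrightarrow> (\<forall>i<p. m \<le> x i)"
  unfolding cmin_def using p_pos by (subst Min_ge_iff) auto

lemma cmin_greater_iff: "m < cmin x \<longleftrightarrow> (\<forall>i<p. m < x i)"
  unfolding cmin_def using p_pos by (subst Min_gr_iff) auto

lemma le_cmax: "i < p \<Longrightarrow> x i \<le> cmax x"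
  unfolding cmax_def by simp

lemma cmin_le: "i < p \<Longrightarrow> cmin x \<le> x i"
  unfolding cmin_def by simp

lemma cmin_le_cmax: "cmin x \<le> cmax x"
  using cmin_le[OF p_pos] le_cmax[OF p_pos] by (rule order_trans)

lemma cmax_mem:
  assumes "x \<in> X"
  shows "cmax x \<in> I"
proof -
  have "cmax x \<in> x ` {..<p}" unfolding cmax_def using p_pos by (intro Max_in) auto
  then show ?thesis using assms unfolding cube_iff by auto
qed

lemma cmin_mem:
  assumes "x \<in> X"
  shows "cmin x \<in> I"
proof -
  have "cmin x \<in> x ` {..<p}" unfolding cmin_def using p_pos by (intro Min_in) auto
  then show ?thesis using assms unfolding cube_iff by auto
qed

lemma F_bounds:
  assumes "x \<in> X" "i < p"
  shows "cmin x \<le> F x i" "F x i \<le> cmax x"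
  using assms by (auto intro!: F_ge F_le cmin_le le_cmax \<alpha>_range)

lemma decseq_cmax_orbit: "x \<in> X \<Longrightarrow> decseq (\<lambda>n. cmax ((F ^^ n) x))"
  unfolding decseq_Suc_iff by (simp add: cmax_le_iff F_bounds(2) funpow_F_cube)

lemma incseq_cmin_orbit: "x \<in> X \<Longrightarrow> incseq (\<lambda>n. cmin ((F ^^ n) x))"
  unfolding incseq_Suc_iff by (simp add: cmin_ge_iff F_bounds(1) funpow_F_cube)

lemma orbit_below_cmax:
  assumes x: "x \<in> X" and path: "(u, i) \<in> E ^^ n" and u: "x u < cmax x"
  shows "(F ^^ n) x i < cmax x"
  using path
proof (induction n arbitrary: i)
  case (Suc n)
  from Suc.prems obtain v where "(u, v) \<in> E ^^ n" and "(v, i) \<in> E" by (rule relpow_Suc_E)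
  then obtain j0 where i: "i < p" and j0: "j0 < d i" and v: "v = \<alpha> i j0"
    unfolding Ealpha_def by blast
  have "(F ^^ n) x (\<alpha> i j) \<le> cmax x" if "j < d i" for j
    using order_trans[OF le_cmax[OF \<alpha>_range[OF i that]] decseqD[OF decseq_cmax_orbit[OF x], of 0 n]]
    by simp
  then show ?case
    using F_less[OF funpow_F_cube[OF x] i _ j0] Suc.IH[OF \<open>(u, v) \<in> E ^^ n\<close>] v by simp
qed (use u in simp)

lemma orbit_above_cmin:
  assumes x: "x \<in> X" and path: "(u, i) \<in> E ^^ n" and u: "cmin x < x u"
  shows "cmin x < (F ^^ n) x i"
  using path
proof (induction n arbitrary: i)
  case (Suc n)
  from Suc.prems obtain v where "(u, v) \<in> E ^^ n" and "(v, i) \<in> E" by (rule relpow_Suc_E)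
  then obtain j0 where i: "i < p" and j0: "j0 < d i" and v: "v = \<alpha> i j0"
    unfolding Ealpha_def by blast
  have "cmin x \<le> (F ^^ n) x (\<alpha> i j)" if "j < d i" for j
    using order_trans[OF incseqD[OF incseq_cmin_orbit[OF x], of 0 n] cmin_le[OF \<alpha>_range[OF i that]]]
    by simp
  then show ?case
    using F_greater[OF funpow_F_cube[OF x] i _ j0] Suc.IH[OF \<open>(u, v) \<in> E ^^ n\<close>] v by simp
qed (use u in simp)

definition spread :: "(nat \<Rightarrow> real) \<Rightarrow> real" where "spread x = cmax x - cmin x"

lemma spread_contracts: "\<exists>N. \<forall>x\<in>X. 0 < spread x \<longrightarrow> spread ((F ^^ N) x) < spread x"
proof -
  obtain r N where r: "r \<in> R" and N: "\<forall>v\<in>{..<p}. (r, v) \<in> E ^^ N"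
    using ergodic_root_primitive[OF finite_lessThan E_subset ergodic_root] by blast
  have "spread ((F ^^ N) x) < spread x" if x: "x \<in> X" and "0 < spread x" for x
  proof (cases "x r < cmax x")
    case True
    then have "cmax ((F ^^ N) x) < cmax x"
      unfolding cmax_less_iff using orbit_below_cmax[OF x] N by blast
    then show ?thesis using incseqD[OF incseq_cmin_orbit[OF x], of 0 N] unfolding spread_def by simp
  next
    case False
    then have "cmin x < x r" using \<open>0 < spread x\<close> unfolding spread_def by linarith
    then have "cmin x < cmin ((F ^^ N) x)"
      unfolding cmin_greater_iff using orbit_above_cmin[OF x] N by blast
    then show ?thesis using decseqD[OF decseq_cmax_orbit[OF x], of 0 N] unfolding spread_def by simp
  qed
  then show ?thesis by blast
qed

lemma continuous_on_F: "continuous_on X F"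
proof (rule continuous_on_coordinatewise_then_product)
  fix i
  show "continuous_on X (\<lambda>x. F x i)"
  proof (cases "i < p")
    case True
    have "continuous_on X (\<lambda>x. args x i)"
    proof (rule continuous_on_coordinatewise_then_product)
      fix j
      show "continuous_on X (\<lambda>x. args x i j)"
        unfolding args_def
        by (cases "j < d i") (simp_all add: continuous_on_subset[OF continuous_on_product_coordinates])
    qed
    then have "continuous_on X (\<lambda>x. M i (args x i))"
      by (rule continuous_on_compose2[OF cont[OF True]]) (use args_cube True in blast)
    then show ?thesis using F_apply[OF True] by simp
  qed (simp add: Malpha_def)
qed

lemma continuous_on_funpow_F: "continuous_on X (F ^^ n)"
proof (induction n)
  case (Suc n)
  then have "continuous_on X (\<lambda>x. F ((F ^^ n) x))"
    by (rule continuous_on_compose2[OF continuous_on_F]) (auto intro: funpow_F_cube)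
  then show ?case by (simp add: o_def)
qed (simp add: continuous_on_id)

lemma continuous_on_cmax: "continuous_on S cmax"
  unfolding cmax_def[abs_def] using p_pos by (intro continuous_on_Max_coords) auto

lemma continuous_on_cmin: "continuous_on S cmin"
  unfolding cmin_def[abs_def] using p_pos by (intro continuous_on_Min_coords) auto

lemma continuous_on_spread: "continuous_on S spread"
  unfolding spread_def[abs_def] by (intro continuous_on_diff continuous_on_cmax continuous_on_cmin)

lemma F_maps_interval_cube:
  assumes "{a..b} \<subseteq> I" "y \<in> cube {a..b} p"
  shows "F y \<in> cube {a..b} p"
proof -
  have y: "y \<in> X" using cube_mono[OF assms(1)] assms(2) by blast
  have "a \<le> cmin y" "cmax y \<le> b" using assms(2) unfolding cube_iff cmin_ge_iff cmax_le_iff by auto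
  then show ?thesis
    using F_bounds[OF y] F_cube[OF y] unfolding cube_iff by (meson atLeastAtMost_iff order_trans)
qed

lemma spread_orbit_tendsto_0:
  assumes x: "x \<in> X"
  shows "(\<lambda>n. spread ((F ^^ n) x)) \<longlonglongrightarrow> 0"
proof -
  obtain N where N: "\<forall>y\<in>X. 0 < spread y \<longrightarrow> spread ((F ^^ N) y) < spread y"
    using spread_contracts by blast
  define C where "C = cube {cmin x..cmax x} p"
  have CI: "{cmin x..cmax x} \<subseteq> I"
    using mem_is_interval_1_I[OF interval cmin_mem[OF x] cmax_mem[OF x]] by auto
  have CX: "C \<subseteq> X" unfolding C_def by (rule cube_mono[OF CI])
  have "(F ^^ n) y \<in> C" if "y \<in> C" for y n
    using that unfolding C_def by (induction n) (simp_all add: F_maps_interval_cube[OF CI])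
  then have C_inv: "(F ^^ n) ` C \<subseteq> C" for n by blast
  have "x \<in> C" using x cmin_le le_cmax unfolding C_def cube_iff by auto
  have "compact C" unfolding C_def by (rule compact_cube[OF compact_Icc])
  have strict_C: "spread ((F ^^ N) y) < spread y" if "y \<in> C" "0 < spread y" for y
    using N subsetD[OF CX that(1)] that(2) by blast
  have "continuous_on C (F ^^ N)" by (rule continuous_on_subset[OF continuous_on_funpow_F CX])
  have small: "\<exists>k. spread (((F ^^ N) ^^ k) x) < e" if "0 < e" for e
    by (rule strict_Lyapunov_eventually_below[where T = "F ^^ N" and V = spread])
      (use \<open>compact C\<close> C_inv \<open>continuous_on C (F ^^ N)\<close> continuous_on_spread strict_C \<open>x \<in> C\<close> that in auto)
  have nonneg: "0 \<le> spread y" for y using cmin_le_cmax[of y] unfolding spread_def by simp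
  have mono: "spread ((F ^^ n) x) \<le> spread ((F ^^ m) x)" if "m \<le> n" for m n
    using decseqD[OF decseq_cmax_orbit[OF x] that] incseqD[OF incseq_cmin_orbit[OF x] that]
    unfolding spread_def by simp
  show ?thesis
  proof (rule LIMSEQ_I)
    fix e :: real assume "0 < e"
    then obtain k where k: "spread ((F ^^ (N * k)) x) < e" using small by (auto simp: funpow_mult)
    have "norm (spread ((F ^^ n) x) - 0) < e" if "N * k \<le> n" for n
      using mono[OF that] nonneg[of "(F ^^ n) x"] k by simp
    then show "\<exists>n0. \<forall>n\<ge>n0. norm (spread ((F ^^ n) x) - 0) < e" by blast
  qed
qed

definition K :: "(nat \<Rightarrow> real) \<Rightarrow> real" where
  "K x = lim (\<lambda>n. cmax ((F ^^ n) x))"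

lemma cmax_orbit_tendsto_K:
  assumes x: "x \<in> X"
  shows "(\<lambda>n. cmax ((F ^^ n) x)) \<longlonglongrightarrow> K x"
proof -
  have "cmin x \<le> cmax ((F ^^ n) x)" for n
    using incseqD[OF incseq_cmin_orbit[OF x], of 0 n] cmin_le_cmax[of "(F ^^ n) x"] by simp
  then obtain L where "(\<lambda>n. cmax ((F ^^ n) x)) \<longlonglongrightarrow> L"
    using decseq_convergent[OF decseq_cmax_orbit[OF x]] by blast
  then show ?thesis unfolding K_def by (simp add: limI)
qed

lemma cmin_orbit_tendsto_K:
  assumes x: "x \<in> X"
  shows "(\<lambda>n. cmin ((F ^^ n) x)) \<longlonglongrightarrow> K x"
  using tendsto_diff[OF cmax_orbit_tendsto_K[OF x] spread_orbit_tendsto_0[OF x]]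
  unfolding spread_def by simp

lemma K_le_cmax_orbit: "x \<in> X \<Longrightarrow> K x \<le> cmax ((F ^^ n) x)"
  using decseq_ge[OF decseq_cmax_orbit cmax_orbit_tendsto_K] by blast

lemma cmin_orbit_le_K: "x \<in> X \<Longrightarrow> cmin ((F ^^ n) x) \<le> K x"
  using incseq_le[OF incseq_cmin_orbit cmin_orbit_tendsto_K] by blast

lemma orbit_tendsto_K:
  assumes "x \<in> X" "i < p"
  shows "(\<lambda>n. (F ^^ n) x i) \<longlonglongrightarrow> K x"
  by (rule real_tendsto_sandwich[OF _ _ cmin_orbit_tendsto_K[OF assms(1)] cmax_orbit_tendsto_K[OF assms(1)]])
    (simp_all add: cmin_le[OF assms(2)] le_cmax[OF assms(2)])

lemma continuous_on_K: "continuous_on X K"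
proof (rule continuous_on_sandwiched_limit
    [where g = "\<lambda>n x. cmin ((F ^^ n) x)" and h = "\<lambda>n x. cmax ((F ^^ n) x)"])
  show "continuous_on X (\<lambda>x. cmin ((F ^^ n) x))" for n
    by (rule continuous_on_compose2[OF continuous_on_cmin continuous_on_funpow_F subset_UNIV])
  show "continuous_on X (\<lambda>x. cmax ((F ^^ n) x))" for n
    by (rule continuous_on_compose2[OF continuous_on_cmax continuous_on_funpow_F subset_UNIV])
qed (simp_all add: cmin_orbit_le_K K_le_cmax_orbit cmin_orbit_tendsto_K cmax_orbit_tendsto_K)

lemma mean_on_K: "mean_on I p K"
  unfolding mean_on_def
proof (intro ballI conjI)
  fix x assume x: "x \<in> X"
  have "cmin x \<le> K x" "K x \<le> cmax x"
    using cmin_orbit_le_K[OF x, of 0] K_le_cmax_orbit[OF x, of 0] by simp_all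
  then show "K x \<in> I" "Min (x ` {..<p}) \<le> K x" "K x \<le> Max (x ` {..<p})"
    using mem_is_interval_1_I[OF interval cmin_mem[OF x] cmax_mem[OF x]]
    unfolding cmin_def cmax_def by simp_all
qed

lemma K_invariant:
  assumes x: "x \<in> X"
  shows "K (F x) = K x"
proof -
  have "(\<lambda>n. (F ^^ Suc n) x 0) \<longlonglongrightarrow> K x"
    using LIMSEQ_Suc[OF orbit_tendsto_K[OF x p_pos]] .
  then have "(\<lambda>n. (F ^^ n) (F x) 0) \<longlonglongrightarrow> K x"
    by (simp add: funpow_Suc_right del: funpow.simps)
  then show ?thesis using orbit_tendsto_K[OF F_cube[OF x] p_pos] LIMSEQ_unique by blast
qed

lemma orbit_root_coords_agree:
  assumes "\<And>i. i \<in> R \<Longrightarrow> x i = x' i" "i \<in> R"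
  shows "(F ^^ n) x i = (F ^^ n) x' i"
  using assms(2)
proof (induction n arbitrary: i)
  case (Suc n)
  have i: "i < p" using Suc.prems R_subset by blast
  have "\<alpha> i j \<in> R" if "j < d i" for j
    using root_pred_closed[OF E_subset _ Suc.prems] i that unfolding Ealpha_def by blast
  then have "args ((F ^^ n) x) i = args ((F ^^ n) x') i"
    unfolding args_def using Suc.IH by (intro restrict_ext) simp
  then show ?case using F_apply[OF i] by simp
qed (use assms(1) in simp)

lemma K_root_determined:
  assumes "x \<in> X" "x' \<in> X" "\<And>i. i \<in> R \<Longrightarrow> x i = x' i"
  shows "K x = K x'"
proof -
  obtain r where r: "r \<in> R" using R_nonempty by blast
  then have "r < p" using R_subset by blast
  have "(\<lambda>n. (F ^^ n) x' r) \<longlonglongrightarrow> K x"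
    using orbit_tendsto_K[OF assms(1) \<open>r < p\<close>] orbit_root_coords_agree[OF assms(3) r] by simp
  then show ?thesis using orbit_tendsto_K[OF assms(2) \<open>r < p\<close>] LIMSEQ_unique by blast
qed

abbreviation "root_list \<equiv> sorted_list_of_set R"

lemma bij_betw_root_list: "bij_betw ((!) root_list) {..<card R} R"
  using R_subset finite_subset[OF R_subset] by (intro bij_betw_nth) simp_all

text \<open>The coordinates off the root are irrelevant for K; filling them with y 0 keeps all values
  of root_ext y among those of y.\<close>
definition root_ext :: "(nat \<Rightarrow> real) \<Rightarrow> nat \<Rightarrow> real" where
  "root_ext y = restrict (\<lambda>i. y (if i \<in> R then inv_into {..<card R} ((!) root_list) i else 0)) {..<p}"

definition K_root :: "(nat \<Rightarrow> real) \<Rightarrow> real" where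
  "K_root y = K (root_ext y)"

lemma root_ext_values: "i < p \<Longrightarrow> root_ext y i \<in> y ` {..<card R}"
  using bij_betwE[OF bij_betw_inv_into[OF bij_betw_root_list]] R_nonempty finite_subset[OF R_subset]
  unfolding root_ext_def by (auto simp: card_gt_0_iff)

lemma root_ext_cube:
  assumes y: "y \<in> cube I (card R)"
  shows "root_ext y \<in> X"
  unfolding cube_iff
proof safe
  fix i assume "i < p"
  then obtain j where "j < card R" "root_ext y i = y j" using root_ext_values by blast
  then show "root_ext y i \<in> I" using y unfolding cube_iff by simp
next
  fix i assume "p \<le> i"
  then show "root_ext y i = undefined" unfolding root_ext_def by simp
qed

lemma root_ext_restrict: "i \<in> R \<Longrightarrow> root_ext (restrict (\<lambda>j. x (root_list ! j)) {..<card R}) i = x i"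
  using bij_betw_inv_into_right[OF bij_betw_root_list] bij_betwE[OF bij_betw_inv_into[OF bij_betw_root_list]]
    R_subset unfolding root_ext_def by auto

lemma mean_on_K_root: "mean_on I (card R) K_root"
  unfolding mean_on_def
proof (intro ballI conjI)
  fix y assume y: "y \<in> cube I (card R)"
  have sub: "root_ext y ` {..<p} \<subseteq> y ` {..<card R}" using root_ext_values by blast
  have ne: "root_ext y ` {..<p} \<noteq> {}" using p_pos by blast
  have K: "K (root_ext y) \<in> I" "Min (root_ext y ` {..<p}) \<le> K (root_ext y)"
    "K (root_ext y) \<le> Max (root_ext y ` {..<p})"
    using mean_on_K root_ext_cube[OF y] unfolding mean_on_def by blast+
  show "K_root y \<in> I" using K(1) unfolding K_root_def .
  show "Min (y ` {..<card R}) \<le> K_root y"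
    using Min_antimono[OF sub ne] K(2) unfolding K_root_def by simp
  show "K_root y \<le> Max (y ` {..<card R})"
    using Max_mono[OF sub ne] K(3) unfolding K_root_def by simp
qed

lemma K_eq_K_root:
  assumes x: "x \<in> X"
  shows "K x = K_root (restrict (\<lambda>j. x (root_list ! j)) {..<card R})"
proof -
  have "root_list ! j \<in> R" if "j < card R" for j
    using bij_betwE[OF bij_betw_root_list] that by blast
  then have "restrict (\<lambda>j. x (root_list ! j)) {..<card R} \<in> cube I (card R)"
    using x R_subset unfolding cube_iff by auto
  then show ?thesis
    unfolding K_root_def using root_ext_restrict
    by (intro K_root_determined[OF x root_ext_cube]) simp_all
qed

lemma K_unique:
  assumes "\<forall>x\<in>X. \<forall>i<p. (\<lambda>n. (F ^^ n) x i) \<longlonglongrightarrow> K' x" "x \<in> X"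
  shows "K' x = K x"
  using LIMSEQ_unique[OF assms(1)[rule_format, OF assms(2) p_pos] orbit_tendsto_K[OF assms(2) p_pos]] .

end


theorem theorem3p1:
  fixes I :: "real set" and p :: nat and d :: "nat \<Rightarrow> nat"
    and \<alpha> :: "nat \<Rightarrow> nat \<Rightarrow> nat" and M :: "nat \<Rightarrow> (nat \<Rightarrow> real) \<Rightarrow> real"
  assumes I: "is_interval I"
    and p: "p \<ge> 1"
    and d: "\<And>i. i < p \<Longrightarrow> d i \<ge> 1"
    and \<alpha>: "\<And>i j. i < p \<Longrightarrow> j < d i \<Longrightarrow> \<alpha> i j < p"
    and mean: "\<And>i. i < p \<Longrightarrow> mean_on I (d i) (M i)"
    and erg: "ergodic (root {..<p} (Ealpha d \<alpha> p)) (root_edges {..<p} (Ealpha d \<alpha> p))"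
    and cont: "\<And>i. i < p \<Longrightarrow> continuous_on (cube I (d i)) (M i)"
    and strict: "\<And>i. i < p \<Longrightarrow> strict_mean_on I (d i) (M i)"
  shows "\<exists>K. continuous_on (cube I p) K \<and> mean_on I p K
           \<and> (\<forall>x\<in>cube I p. K (Malpha M d \<alpha> p x) = K x)
           \<and> (\<forall>x\<in>cube I p. \<forall>i<p. (\<lambda>n. (Malpha M d \<alpha> p ^^ n) x i) \<longlonglongrightarrow> K x)
           \<and> (\<exists>Ks. mean_on I (card (root {..<p} (Ealpha d \<alpha> p))) Ks \<and>
                (\<forall>x\<in>cube I p. K x = Ks (restrict
                    (\<lambda>j. x (sorted_list_of_set (root {..<p} (Ealpha d \<alpha> p)) ! j))
                    {..<card (root {..<p} (Ealpha d \<alpha> p))})))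
           \<and> (\<forall>K'. continuous_on (cube I p) K' \<and> mean_on I p K'
                  \<and> (\<forall>x\<in>cube I p. K' (Malpha M d \<alpha> p x) = K' x)
                  \<and> (\<forall>x\<in>cube I p. \<forall>i<p. (\<lambda>n. (Malpha M d \<alpha> p ^^ n) x i) \<longlonglongrightarrow> K' x)
                  \<longrightarrow> (\<forall>x\<in>cube I p. K' x = K x))"
proof -
  \<comment> \<open>The hypotheses p and mean are implied by erg and strict.\<close>
  interpret averaging_system I p d \<alpha> M
  proof
    show "0 < d i" if "i < p" for i using d[OF that] by simp
  qed (fact I \<alpha> strict cont erg)+
  show ?thesis
    using continuous_on_K mean_on_K K_invariant orbit_tendsto_K mean_on_K_root K_eq_K_root K_unique
    by (intro exI[of _ K]) blast
qed

end
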